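(* Let $\lambda>0$, $0<\gamma\le\frac{\lambda}{\lambda^2+2\lambda(1+\beta)\Phi_{\max}^2+(1+\beta)^2\Phi_{\max}^4}$, and $\tilde C=I-\gamma(A+\lambda I)$. For every random vector $x\in\mathbb R^d$ with $\mathbb E\|x\|_2^2<\infty$ and every $t\ge0$, $$\sum_{i=0}^{t}\mathbb E\big[\|\tilde C^ix\|_2^2\big]\le\frac{\mathbb E\|x\|_2^2}{\gamma(\mu+\lambda)}.$$
   Context: Let $\mathcal S=\{1,\dots,n\}$ be finite, $\pi$ a policy with irreducible state transition matrix $P^\pi$ and stationary distribution $\rho$, $D=\mathrm{diag}(\rho)$, $\beta\in(0,1)$, features $\phi:\mathcal S\to\mathbb R^d$ with $\|\phi(s)\|_2\le\Phi_{\max}$, $\Phi\in\mathbb R^{n\times d}$ with rows $\phi(s)^\top$ of full column rank, $A=\Phi^\top D(I-\beta P^\pi)\Phi$. The paper calls $\mu$ "the minimum eigenvalue of $A$"; take $\mu=\lambda_{\min}((A+A^\top)/2)>0$. *)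

theory Defs
  imports "HOL-Probability.Probability"
begin

fun matpow :: "real^'n^'n \<Rightarrow> nat \<Rightarrow> real^'n^'n" where
  "matpow A 0 = mat 1"
| "matpow A (Suc k) = A ** matpow A k"

definition stochastic_matrix :: "real^'n^'n \<Rightarrow> bool" where
  "stochastic_matrix P \<longleftrightarrow> (\<forall>i j. 0 \<le> P $ i $ j) \<and> (\<forall>i. (\<Sum>j\<in>UNIV. P $ i $ j) = 1)"

definition irreducible_matrix :: "real^'n^'n \<Rightarrow> bool" where
  "irreducible_matrix P \<longleftrightarrow> (\<forall>i j. \<exists>k. matpow P k $ i $ j > 0)"

definition stationary_distribution :: "real^'n^'n \<Rightarrow> real^'n \<Rightarrow> bool" where
  "stationary_distribution P \<rho> \<longleftrightarrow> (\<forall>i. 0 \<le> \<rho> $ i) \<and> (\<Sum>i\<in>UNIV. \<rho> $ i) = 1 \<and> \<rho> v* P = \<rho>"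

definition diag_mat :: "real^'n \<Rightarrow> real^'n^'n" where
  "diag_mat v = (\<chi> i j. if i = j then v $ i else 0)"

definition lambda_min :: "real^'n^'n \<Rightarrow> real" where
  "lambda_min S = Min {l. \<exists>v. v \<noteq> 0 \<and> S *v v = l *\<^sub>R v}"

end

theory Submission
  imports Defs
begin

text \<open>
  The quadratic form of \<open>A\<close> is bounded below by \<open>\<mu>|w|\<^sup>2\<close>, and
  \<open>|Aw| \<le> K|w|\<close> with \<open>K = (1 + \<beta>)\<Phi>max\<^sup>2\<close> because the rows of \<open>\<Phi>\<close> are bounded, \<open>P\<close> is stochastic
  and \<open>\<rho>\<close> is a probability vector. Expanding \<open>|Cv|\<^sup>2\<close>, the step size condition
  \<open>\<gamma>(K + \<lambda>)\<^sup>2 \<le> \<lambda>\<close> yields the contraction \<open>|Cv|\<^sup>2 \<le> q|v|\<^sup>2\<close> with \<open>q = 1 - \<gamma>(\<mu> + \<lambda>)\<close>.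
  Hence \<open>E|C\<^sup>ix|\<^sup>2 \<le> q\<^sup>i E|x|\<^sup>2\<close>, and the geometric series sums to \<open>1/(1 - q) = 1/(\<gamma>(\<mu> + \<lambda>))\<close>.
  Irreducibility and full rank only serve to make \<open>\<mu>\<close> positive, which is assumed directly.
\<close>

lemma inner_symmetric_matrix_mult:
  fixes S :: "real^'d^'d"
  assumes "transpose S = S"
  shows "u \<bullet> (S *v v) = (S *v u) \<bullet> v"
  by (metis assms dot_lmul_matrix vector_transpose_matrix)

lemma psd_quadratic_form_eq_0_imp_kernel:
  fixes T :: "real^'d^'d"
  assumes sym: "transpose T = T" and psd: "\<And>w. 0 \<le> w \<bullet> (T *v w)"
    and zero: "v \<bullet> (T *v v) = 0"
  shows "T *v v = 0"
proof (rule ccontr)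
  define z where "z = T *v v"
  define c where "c = z \<bullet> (T *v z)"
  assume "T *v v \<noteq> 0"
  then have zz: "0 < z \<bullet> z" by (simp add: z_def)
  have c0: "0 \<le> c" using psd by (simp add: c_def)
  have expand: "(v + t *\<^sub>R z) \<bullet> (T *v (v + t *\<^sub>R z)) = 2 * t * (z \<bullet> z) + t\<^sup>2 * c" for t
  proof -
    have "v \<bullet> (T *v z) = z \<bullet> z"
      using inner_symmetric_matrix_mult[OF sym, of v z] by (simp add: z_def)
    then show ?thesis
      using zero by (simp add: c_def z_def inner_commute algebra_simps power2_eq_square)
  qed
  \<comment> \<open>\<open>v\<close> minimises the form, yet a small step from \<open>v\<close> along \<open>-z\<close> makes it negative\<close>
  define s where "s = (z \<bullet> z) / (c + 1)"
  have s0: "0 < s" using zz c0 by (simp add: s_def)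
  have "s * c \<le> z \<bullet> z"
    using zz c0 by (simp add: s_def field_simps)
  then have "s * (- 2 * (z \<bullet> z) + s * c) < 0"
    using s0 zz by (intro mult_pos_neg) linarith+
  moreover have "0 \<le> s * (- 2 * (z \<bullet> z) + s * c)"
    using psd[of "v + (- s) *\<^sub>R z"] expand[of "- s"] by (simp add: algebra_simps power2_eq_square)
  ultimately show False by simp
qed

lemma symmetric_matrix_min_eigenvalue:
  fixes S :: "real^'d^'d"
  assumes sym: "transpose S = S"
  obtains m v where "v \<noteq> 0" "S *v v = m *\<^sub>R v" "\<And>w. m * (w \<bullet> w) \<le> w \<bullet> (S *v w)"
proof -
  define f where "f w = w \<bullet> (S *v w)" for w :: "real^'d"
  have "continuous_on (sphere 0 1) f"
    unfolding f_def by (intro continuous_intros matrix_vector_mult_linear_continuous_on)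
  then obtain v where v: "v \<in> sphere 0 1" and min: "\<And>u. u \<in> sphere 0 1 \<Longrightarrow> f v \<le> f u"
    using continuous_attains_inf[OF compact_sphere, of 0 1 f] by auto
  define m where "m = f v"
  have bound: "m * (w \<bullet> w) \<le> w \<bullet> (S *v w)" for w
  proof (cases "w = 0")
    case False
    then have "m \<le> f ((1 / norm w) *\<^sub>R w)" unfolding m_def by (intro min) simp
    then have "m \<le> (w \<bullet> (S *v w)) / (norm w)\<^sup>2"
      by (simp add: f_def matrix_vector_mult_scaleR power2_eq_square)
    then show ?thesis using False by (simp add: field_simps dot_square_norm)
  qed simp
  define T where "T = S - m *\<^sub>R mat 1"
  have Tw: "w \<bullet> (T *v w) = w \<bullet> (S *v w) - m * (w \<bullet> w)" for w
    by (simp add: T_def matrix_vector_mult_diff_rdistrib scaleR_matrix_vector_assoc[symmetric]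
        inner_diff_right)
  have "T *v v = 0"
  proof (rule psd_quadratic_form_eq_0_imp_kernel)
    show "transpose T = T" using sym by (simp add: T_def vec_eq_iff transpose_def mat_def)
  next
    show "0 \<le> w \<bullet> (T *v w)" for w using bound[of w] by (simp add: Tw)
  next
    show "v \<bullet> (T *v v) = 0" using v by (simp add: Tw m_def f_def dot_square_norm)
  qed
  then have "S *v v = m *\<^sub>R v"
    by (simp add: T_def matrix_vector_mult_diff_rdistrib scaleR_matrix_vector_assoc[symmetric])
  moreover have "v \<noteq> 0" using v by auto
  ultimately show ?thesis using that bound by blast
qed

lemma finite_eigenvalues_symmetric:
  fixes S :: "real^'d^'d"
  assumes sym: "transpose S = S"
  shows "finite {l. \<exists>v. v \<noteq> 0 \<and> S *v v = l *\<^sub>R v}"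
proof -
  define E where "E = {l. \<exists>v. v \<noteq> 0 \<and> S *v v = l *\<^sub>R v}"
  define g where "g l = (SOME v. v \<noteq> 0 \<and> S *v v = l *\<^sub>R v)" for l
  have g: "g l \<noteq> 0 \<and> S *v g l = l *\<^sub>R g l" if "l \<in> E" for l
    using that unfolding E_def g_def by (metis (mono_tags, lifting) mem_Collect_eq someI_ex)
  have inj: "inj_on g E"
  proof (rule inj_onI)
    fix a b assume a: "a \<in> E" and "b \<in> E" and "g a = g b"
    then have "a *\<^sub>R g a = b *\<^sub>R g a" using g by metis
    then show "a = b" using g[OF a] by simp
  qed
  have "pairwise orthogonal (g ` E)"
  proof (unfold pairwise_def, clarify)
    fix a b assume a: "a \<in> E" and b: "b \<in> E" and "g a \<noteq> g b"
    then have "a \<noteq> b" by auto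
    have "b * (g a \<bullet> g b) = a * (g a \<bullet> g b)"
      using inner_symmetric_matrix_mult[OF sym, of "g a" "g b"] g[OF a] g[OF b] by simp
    then show "orthogonal (g a) (g b)" using \<open>a \<noteq> b\<close> by (simp add: orthogonal_def)
  qed
  moreover have "0 \<notin> g ` E" using g by auto
  ultimately have "independent (g ` E)" using pairwise_orthogonal_independent by blast
  then have "finite (g ` E)" using independent_bound by blast
  with inj show ?thesis using finite_imageD E_def by blast
qed

lemma lambda_min_quadratic_form_le:
  fixes S :: "real^'d^'d"
  assumes sym: "transpose S = S"
  shows "lambda_min S * (w \<bullet> w) \<le> w \<bullet> (S *v w)"
proof -
  obtain m v where "v \<noteq> 0" "S *v v = m *\<^sub>R v" and bound: "\<And>w. m * (w \<bullet> w) \<le> w \<bullet> (S *v w)"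
    using symmetric_matrix_min_eigenvalue[OF sym] by blast
  then have "lambda_min S \<le> m"
    unfolding lambda_min_def using finite_eigenvalues_symmetric[OF sym] by (intro Min_le) auto
  then have "lambda_min S * (w \<bullet> w) \<le> m * (w \<bullet> w)" by (simp add: mult_right_mono)
  from this bound[of w] show ?thesis by (rule order_trans)
qed

lemma quadratic_form_symmetric_part:
  fixes A :: "real^'d^'d"
  shows "w \<bullet> (((1/2) *\<^sub>R (A + transpose A)) *v w) = w \<bullet> (A *v w)"
proof -
  have "w \<bullet> (transpose A *v w) = w \<bullet> (A *v w)"
    by (metis dot_lmul_matrix inner_commute transpose_transpose vector_transpose_matrix)
  then show ?thesis
    by (simp add: scaleR_matrix_vector_assoc[symmetric] matrix_vector_mult_add_rdistrib inner_add)
qed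

lemma stochastic_matrix_vector_abs_le:
  assumes "stochastic_matrix P" and "\<And>j. \<bar>y $ j\<bar> \<le> b"
  shows "\<bar>(P *v y) $ i\<bar> \<le> b"
proof -
  have "\<bar>(P *v y) $ i\<bar> \<le> (\<Sum>j\<in>UNIV. P $ i $ j * b)"
    using assms unfolding stochastic_matrix_def matrix_vector_mult_def
    by (auto intro!: order_trans[OF sum_abs] sum_mono simp: abs_mult mult_left_mono)
  also have "\<dots> = b"
    using assms(1) unfolding stochastic_matrix_def by (simp add: sum_distrib_right[symmetric])
  finally show ?thesis .
qed

lemma norm_feature_matrix_mult_le:
  fixes P :: "real^'n^'n" and \<rho> :: "real^'n" and \<Phi> :: "real^'d^'n"
  assumes stoch: "stochastic_matrix P"
    and \<rho>_nonneg: "\<And>s. 0 \<le> \<rho> $ s" and \<rho>_sum: "(\<Sum>s\<in>UNIV. \<rho> $ s) = 1"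
    and \<beta>: "0 \<le> \<beta>" and feat: "\<And>s. norm (\<Phi> $ s) \<le> \<Phi>max"
  shows "norm ((transpose \<Phi> ** diag_mat \<rho> ** (mat 1 - \<beta> *\<^sub>R P) ** \<Phi>) *v v)
           \<le> (1 + \<beta>) * \<Phi>max\<^sup>2 * norm v"
proof -
  have \<Phi>max: "0 \<le> \<Phi>max" using feat norm_ge_zero order_trans by metis
  define y where "y = \<Phi> *v v"
  define z where "z = (mat 1 - \<beta> *\<^sub>R P) *v y"
  have z_eq: "z = y - \<beta> *\<^sub>R (P *v y)"
    by (simp add: z_def matrix_vector_mult_diff_rdistrib scaleR_matrix_vector_assoc)
  have y_le: "\<bar>y $ s\<bar> \<le> \<Phi>max * norm v" for s
  proof -
    have "\<bar>y $ s\<bar> \<le> norm (\<Phi> $ s) * norm v"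
      using Cauchy_Schwarz_ineq2 by (simp add: y_def matrix_mult_dot)
    also have "\<dots> \<le> \<Phi>max * norm v" using feat by (simp add: mult_right_mono)
    finally show ?thesis .
  qed
  have z_le: "\<bar>z $ s\<bar> \<le> (1 + \<beta>) * \<Phi>max * norm v" for s
  proof -
    have "\<bar>(P *v y) $ s\<bar> \<le> \<Phi>max * norm v"
      using stochastic_matrix_vector_abs_le[OF stoch y_le] .
    then have "\<beta> * \<bar>(P *v y) $ s\<bar> \<le> \<beta> * (\<Phi>max * norm v)"
      using \<beta> by (rule mult_left_mono)
    then have "\<bar>z $ s\<bar> \<le> \<bar>y $ s\<bar> + \<beta> * (\<Phi>max * norm v)"
      using \<beta> abs_triangle_ineq4[of "y $ s" "\<beta> * (P *v y) $ s"] by (simp add: z_eq abs_mult)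
    then show ?thesis using y_le[of s] by (simp add: algebra_simps)
  qed
  have "(transpose \<Phi> ** diag_mat \<rho> ** (mat 1 - \<beta> *\<^sub>R P) ** \<Phi>) *v v
      = transpose \<Phi> *v (diag_mat \<rho> *v z)"
    by (simp add: z_def y_def matrix_vector_mul_assoc matrix_mul_assoc)
  also have "\<dots> = (\<Sum>s\<in>UNIV. (\<rho> $ s * z $ s) *\<^sub>R \<Phi> $ s)"
  proof -
    have "(diag_mat \<rho> *v z) $ s = \<rho> $ s * z $ s" for s
      by (simp add: diag_mat_def matrix_vector_mult_def if_distrib[where f="\<lambda>x. x * _"]
          cong: if_cong)
    moreover have "transpose \<Phi> *v u = (\<Sum>s\<in>UNIV. u $ s *\<^sub>R \<Phi> $ s)" for u
      by (simp add: vec_eq_iff matrix_vector_mult_def transpose_def sum_component mult.commute)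
    ultimately show ?thesis by simp
  qed
  also have "norm \<dots> \<le> (\<Sum>s\<in>UNIV. \<rho> $ s * ((1 + \<beta>) * \<Phi>max * norm v * \<Phi>max))"
  proof (rule order_trans[OF norm_sum sum_mono])
    fix s
    have "\<bar>z $ s\<bar> * norm (\<Phi> $ s) \<le> ((1 + \<beta>) * \<Phi>max * norm v) * \<Phi>max"
      using z_le[of s] feat \<beta> \<Phi>max by (intro mult_mono) auto
    then show "norm ((\<rho> $ s * z $ s) *\<^sub>R \<Phi> $ s) \<le> \<rho> $ s * ((1 + \<beta>) * \<Phi>max * norm v * \<Phi>max)"
      using \<rho>_nonneg[of s] by (simp add: abs_mult mult.assoc mult_left_mono)
  qed
  also have "\<dots> = (1 + \<beta>) * \<Phi>max\<^sup>2 * norm v"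
    using \<rho>_sum by (simp add: sum_distrib_right[symmetric] power2_eq_square)
  finally show ?thesis .
qed

lemma regularized_step_norm_sq_le:
  fixes A :: "real^'d^'d"
  assumes coercive: "\<And>w. mu * (w \<bullet> w) \<le> w \<bullet> (A *v w)" and mu: "0 \<le> mu"
    and bounded: "\<And>w. norm (A *v w) \<le> K * norm w" and K: "0 \<le> K"
    and gam: "0 < gam" "gam * (K + lam)\<^sup>2 \<le> lam"
  shows "(norm ((mat 1 - gam *\<^sub>R (A + lam *\<^sub>R mat 1)) *v v))\<^sup>2 \<le> (1 - gam * (mu + lam)) * (norm v)\<^sup>2"
proof -
  have lam: "0 \<le> lam" using gam by (metis mult_nonneg_nonneg less_imp_le zero_le_power2 order_trans)
  define B where "B = A *v v + lam *\<^sub>R v"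
  have Cv: "(mat 1 - gam *\<^sub>R (A + lam *\<^sub>R mat 1)) *v v = v - gam *\<^sub>R B"
    by (simp add: B_def matrix_vector_mult_diff_rdistrib matrix_vector_mult_add_rdistrib
        scaleR_matrix_vector_assoc[symmetric])
  have expand: "(norm ((mat 1 - gam *\<^sub>R (A + lam *\<^sub>R mat 1)) *v v))\<^sup>2
      = v \<bullet> v - 2 * gam * (v \<bullet> B) + gam\<^sup>2 * (B \<bullet> B)"
    unfolding Cv power2_norm_eq_inner
    by (simp add: inner_diff inner_commute algebra_simps power2_eq_square)
  have "(mu + lam) * (v \<bullet> v) \<le> v \<bullet> B"
    using coercive[of v] by (simp add: B_def algebra_simps)
  then have cross: "2 * gam * ((mu + lam) * (v \<bullet> v)) \<le> 2 * gam * (v \<bullet> B)"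
    using gam by simp
  have "norm B \<le> (K + lam) * norm v"
    using bounded[of v] norm_triangle_ineq[of "A *v v" "lam *\<^sub>R v"] lam
    by (simp add: B_def algebra_simps)
  then have "B \<bullet> B \<le> (K + lam)\<^sup>2 * (v \<bullet> v)"
    by (metis norm_ge_zero power2_norm_eq_inner power_mono power_mult_distrib)
  then have "gam\<^sup>2 * (B \<bullet> B) \<le> gam\<^sup>2 * ((K + lam)\<^sup>2 * (v \<bullet> v))"
    by (rule mult_left_mono) simp
  also have "\<dots> = gam * (gam * (K + lam)\<^sup>2) * (v \<bullet> v)"
    by (simp add: power2_eq_square)
  also have "\<dots> \<le> gam * lam * (v \<bullet> v)"
    using gam by (simp add: mult_right_mono mult_left_mono)
  finally have square: "gam\<^sup>2 * (B \<bullet> B) \<le> gam * lam * (v \<bullet> v)" .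
  have "0 \<le> gam * mu * (v \<bullet> v)" using gam mu by simp
  then show ?thesis
    using expand cross square by (simp add: power2_norm_eq_inner algebra_simps)
qed

lemma matpow_norm_sq_le:
  fixes C :: "real^'d^'d"
  assumes step: "\<And>v. (norm (C *v v))\<^sup>2 \<le> q * (norm v)\<^sup>2" and q: "0 \<le> q"
  shows "(norm (matpow C i *v v))\<^sup>2 \<le> q ^ i * (norm v)\<^sup>2"
proof (induction i)
  case (Suc i)
  have "(norm (matpow C (Suc i) *v v))\<^sup>2 = (norm (C *v (matpow C i *v v)))\<^sup>2"
    by (simp add: matrix_vector_mul_assoc)
  also have "\<dots> \<le> q * (norm (matpow C i *v v))\<^sup>2" by (rule step)
  also have "\<dots> \<le> q * (q ^ i * (norm v)\<^sup>2)" using Suc q by (rule mult_left_mono)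
  finally show ?case by simp
qed simp

lemma sum_power_le_inverse:
  fixes q :: real
  assumes "0 \<le> q" "q < 1"
  shows "(\<Sum>i\<le>t. q ^ i) \<le> 1 / (1 - q)"
proof -
  have "(\<Sum>i\<le>t. q ^ i) = (1 - q ^ Suc t) / (1 - q)"
    using sum_gp_basic[of q t] assms by (simp add: field_simps)
  also have "\<dots> \<le> 1 / (1 - q)"
    using assms by (intro divide_right_mono) auto
  finally show ?thesis .
qed

lemma sum_integral_matpow_norm_sq_le:
  fixes C :: "real^'d^'d" and x :: "'w \<Rightarrow> real^'d"
  assumes step: "\<And>v. (norm (C *v v))\<^sup>2 \<le> q * (norm v)\<^sup>2" and q: "0 \<le> q" "q < 1"
    and x_meas: "x \<in> borel_measurable M" and x_int: "integrable M (\<lambda>\<omega>. (norm (x \<omega>))\<^sup>2)"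
  shows "(\<Sum>i\<le>t. integral\<^sup>L M (\<lambda>\<omega>. (norm (matpow C i *v x \<omega>))\<^sup>2))
           \<le> integral\<^sup>L M (\<lambda>\<omega>. (norm (x \<omega>))\<^sup>2) / (1 - q)"
proof -
  define E where "E = integral\<^sup>L M (\<lambda>\<omega>. (norm (x \<omega>))\<^sup>2)"
  have E: "0 \<le> E" unfolding E_def by (rule integral_nonneg_AE) simp
  have term_le: "integral\<^sup>L M (\<lambda>\<omega>. (norm (matpow C i *v x \<omega>))\<^sup>2) \<le> q ^ i * E" for i
  proof -
    have "(\<lambda>y. (norm (matpow C i *v y))\<^sup>2) \<in> borel_measurable borel"
      by (intro borel_measurable_continuous_onI continuous_intros matrix_vector_mult_linear_continuous_on)
    then have meas: "(\<lambda>\<omega>. (norm (matpow C i *v x \<omega>))\<^sup>2) \<in> borel_measurable M"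
      by (rule measurable_compose[OF x_meas])
    have int: "integrable M (\<lambda>\<omega>. q ^ i * (norm (x \<omega>))\<^sup>2)"
      using x_int by simp
    have "integrable M (\<lambda>\<omega>. (norm (matpow C i *v x \<omega>))\<^sup>2)"
      by (rule Bochner_Integration.integrable_bound[OF int meas])
        (simp add: matpow_norm_sq_le[OF step q(1)] q(1))
    then show ?thesis
      using integral_mono[OF _ int matpow_norm_sq_le[OF step q(1)]] by (simp add: E_def)
  qed
  have "(\<Sum>i\<le>t. integral\<^sup>L M (\<lambda>\<omega>. (norm (matpow C i *v x \<omega>))\<^sup>2)) \<le> (\<Sum>i\<le>t. q ^ i) * E"
    by (simp add: sum_distrib_right term_le sum_mono)
  also have "\<dots> \<le> 1 / (1 - q) * E"
    using sum_power_le_inverse[OF q] E by (rule mult_right_mono)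
  finally show ?thesis by (simp add: E_def)
qed

theorem mainTheorem18:
  fixes P :: "real^'n^'n" and \<rho> :: "real^'n" and \<beta> :: real
    and \<Phi> :: "real^'d^'n" and \<Phi>max :: real
    and A :: "real^'d^'d" and mu lam gam :: real and C :: "real^'d^'d"
    and M :: "'w measure" and x :: "'w \<Rightarrow> real^'d" and t :: nat
  assumes stoch: "stochastic_matrix P"
    and irr: "irreducible_matrix P"
    and stat: "stationary_distribution P \<rho>"
    and beta: "0 < \<beta>" "\<beta> < 1"
    and feat: "\<forall>s. norm (\<Phi> $ s) \<le> \<Phi>max"
    and rank: "rank \<Phi> = CARD('d)"
    and A_def: "A = transpose \<Phi> ** diag_mat \<rho> ** (mat 1 - \<beta> *\<^sub>R P) ** \<Phi>"
    and mu_def: "mu = lambda_min ((1/2) *\<^sub>R (A + transpose A))"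
    and mu_pos: "mu > 0"
    and lam: "lam > 0"
    and gam: "0 < gam"
      "gam \<le> lam / (lam\<^sup>2 + 2 * lam * (1 + \<beta>) * \<Phi>max\<^sup>2 + (1 + \<beta>)\<^sup>2 * \<Phi>max ^ 4)"
    and C_def: "C = mat 1 - gam *\<^sub>R (A + lam *\<^sub>R mat 1)"
    and M: "prob_space M"
    and xmeas: "x \<in> borel_measurable M"
    and xint: "integrable M (\<lambda>\<omega>. (norm (x \<omega>))\<^sup>2)"
  shows "(\<Sum>i\<le>t. integral\<^sup>L M (\<lambda>\<omega>. (norm (matpow C i *v x \<omega>))\<^sup>2))
           \<le> integral\<^sup>L M (\<lambda>\<omega>. (norm (x \<omega>))\<^sup>2) / (gam * (mu + lam))"
proof -
  define S where "S = (1/2) *\<^sub>R (A + transpose A)"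
  have "transpose S = S" by (simp add: S_def vec_eq_iff transpose_def)
  then have coercive: "mu * (w \<bullet> w) \<le> w \<bullet> (A *v w)" for w
    using lambda_min_quadratic_form_le[of S w] quadratic_form_symmetric_part[of w A]
    by (simp add: mu_def S_def)
  define K where "K = (1 + \<beta>) * \<Phi>max\<^sup>2"
  have K: "0 \<le> K" using beta by (simp add: K_def)
  have bounded: "norm (A *v w) \<le> K * norm w" for w
    unfolding A_def K_def using stat beta feat
    by (intro norm_feature_matrix_mult_le[OF stoch]) (auto simp: stationary_distribution_def)
  have "lam\<^sup>2 + 2 * lam * (1 + \<beta>) * \<Phi>max\<^sup>2 + (1 + \<beta>)\<^sup>2 * \<Phi>max ^ 4 = (K + lam)\<^sup>2"
    by (simp add: K_def power2_eq_square power4_eq_xxxx algebra_simps)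
  then have step_size: "gam * (K + lam)\<^sup>2 \<le> lam"
    using gam lam K by (simp add: field_simps)
  define q where "q = 1 - gam * (mu + lam)"
  have step: "(norm (C *v v))\<^sup>2 \<le> q * (norm v)\<^sup>2" for v
    unfolding C_def q_def using mu_pos
    by (intro regularized_step_norm_sq_le[OF coercive _ bounded K gam(1) step_size]) simp
  have "0 \<le> q"
  proof -
    obtain v :: "real^'d" where "v \<noteq> 0" using vec_eq_iff by (metis zero_neq_one axis_nth)
    moreover have "0 \<le> q * (norm v)\<^sup>2" using step[of v] by (meson order_trans zero_le_power2)
    ultimately show ?thesis by (simp add: zero_le_mult_iff)
  qed
  moreover have "q < 1" using gam mu_pos lam by (simp add: q_def)
  ultimately show ?thesis
    using sum_integral_matpow_norm_sq_le[OF step _ _ xmeas xint] by (simp add: q_def)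
qed

end
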